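(* For every $t\in(0,1)$ and every $h>0$, with $a=t/h$ and $b=(1-t)/h$, $$\lim_{n \to \infty} \sum_{k \ge 0} B^{n-k}_k(t;h) = \int_0^1 \frac{x^{a-1}(1-x)^{b-1}}{(1+x)\,\mathrm{B}(a,b)}\,dx,$$ where $\mathrm{B}(a,b)$ is the Beta function.
   Context: For $h\ge 0$, the $h$-Bernstein polynomials are $$B^m_k(t;h) = \binom{m}{k}\frac{\prod_{i=0}^{k-1}(t+ih)\prod_{i=0}^{m-k-1}(1-t+ih)}{\prod_{i=0}^{m-1}(1+ih)}$$ for integers $0\le k\le m$ (empty products equal $1$), and $B^m_k(t;h)=0$ for $m<k$. *)

theory Defs
  imports "HOL-Analysis.Analysis"
begin

definition hBernstein :: "nat \<Rightarrow> nat \<Rightarrow> real \<Rightarrow> real \<Rightarrow> real" where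
  "hBernstein m k t h =
     (if k \<le> m then
        real (m choose k) * (\<Prod>i<k. t + real i * h) * (\<Prod>i<m - k. 1 - t + real i * h)
          / (\<Prod>i<m. 1 + real i * h)
      else 0)"

end

theory Submission
  imports Defs
begin

text \<open>
  With \<open>a = t/h\<close> and \<open>b = (1-t)/h\<close> (so \<open>a + b = 1/h\<close>), the h-Bernstein polynomial
  is a ratio of Pochhammer symbols, i.e. \<open>B^m_k(t;h) = C(m,k) B(a+k, b+m-k) / B(a,b)\<close>,
  a moment of the Beta density \<open>x^(a-1) (1-x)^(b-1) / B(a,b)\<close>.
  Summing along the antidiagonal \<open>m = n - k\<close> therefore integrates that density against
  \<open>\<Sum>k. C(n-k,k) x^k (1-x)^(n-2k)\<close>, a Fibonacci-type polynomial satisfying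
  \<open>F(n+2) = (1-x) F(n+1) + x F(n)\<close>, which forces it to equal \<open>\<Sum>i\<le>n. (-x)^i\<close>.
  These partial sums are bounded by 2 on \<open>[0,1]\<close> and tend to \<open>1/(1+x)\<close> on \<open>[0,1)\<close>,
  so dominated convergence gives the limit.
\<close>

definition fib_poly :: "'a::comm_semiring_1 \<Rightarrow> 'a \<Rightarrow> nat \<Rightarrow> 'a" where
  "fib_poly x y n = (\<Sum>k\<le>n. of_nat ((n - k) choose k) * x ^ k * y ^ (n - 2 * k))"

lemma fib_poly_Suc_Suc:
  "fib_poly x y (Suc (Suc n)) = y * fib_poly x y (Suc n) + x * fib_poly x y n"
proof -
  have shift: "fib_poly x y (Suc m) = y ^ Suc m +
      (\<Sum>k\<le>m. of_nat ((m - k) choose Suc k) * x ^ Suc k * y ^ (m - 1 - 2 * k))" for m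
    unfolding fib_poly_def by (subst sum.atMost_Suc_shift) simp
  have y_times: "y * (of_nat ((n - k) choose Suc k) * x ^ Suc k * y ^ (n - 1 - 2 * k)) =
      of_nat ((n - k) choose Suc k) * x ^ Suc k * y ^ (n - 2 * k)" for k
  proof (cases "Suc k \<le> n - k")
    case True
    then have "n - 2 * k = Suc (n - 1 - 2 * k)" by auto
    then show ?thesis by (simp add: algebra_simps)
  qed (simp add: binomial_eq_0)
  have pascal: "of_nat ((Suc n - k) choose Suc k) * x ^ Suc k * y ^ (n - 2 * k) =
      x * (of_nat ((n - k) choose k) * x ^ k * y ^ (n - 2 * k)) +
      of_nat ((n - k) choose Suc k) * x ^ Suc k * y ^ (n - 2 * k)" if "k \<le> n" for k
    using that by (simp add: Suc_diff_le algebra_simps)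
  have "fib_poly x y (Suc (Suc n)) = y ^ Suc (Suc n) +
      (\<Sum>k\<le>n. of_nat ((Suc n - k) choose Suc k) * x ^ Suc k * y ^ (n - 2 * k))"
    by (simp add: shift)
  also have "\<dots> = y ^ Suc (Suc n) + (\<Sum>k\<le>n. x * (of_nat ((n - k) choose k) * x ^ k * y ^ (n - 2 * k)) +
      y * (of_nat ((n - k) choose Suc k) * x ^ Suc k * y ^ (n - 1 - 2 * k)))"
    using pascal y_times by (intro arg_cong2[where f = "(+)"] sum.cong) auto
  also have "\<dots> = y ^ Suc (Suc n) + x * fib_poly x y n +
      (\<Sum>k\<le>n. y * (of_nat ((n - k) choose Suc k) * x ^ Suc k * y ^ (n - 1 - 2 * k)))"
    by (simp add: sum.distrib fib_poly_def sum_distrib_left add.assoc)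
  also have "\<dots> = y * fib_poly x y (Suc n) + x * fib_poly x y n"
    by (simp add: shift distrib_left sum_distrib_left add_ac)
  finally show ?thesis .
qed

lemma fib_poly_one_minus:
  fixes x :: "'a::comm_ring_1"
  shows "fib_poly x (1 - x) n = (\<Sum>i\<le>n. (- x) ^ i)"
proof (induction n rule: nat_less_induct)
  case (1 n)
  consider "n = 0" | "n = 1" | m where "n = Suc (Suc m)"
    by (metis One_nat_def not0_implies_Suc)
  then show ?case
  proof cases
    case (3 m)
    then show ?thesis
      using 1 by (simp add: fib_poly_Suc_Suc algebra_simps)
  qed (simp_all add: fib_poly_def)
qed

lemma fib_poly_one_minus_bound:
  fixes x :: real
  assumes "0 \<le> x" "x \<le> 1"
  shows "\<bar>fib_poly x (1 - x) n\<bar> \<le> 2"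
proof -
  have "(1 + x) * fib_poly x (1 - x) n = 1 - (- x) ^ Suc n"
    using sum_gp_basic[of "- x" n] by (simp add: fib_poly_one_minus)
  moreover have "\<bar>(- x) ^ Suc n\<bar> \<le> 1"
    using assms by (simp only: power_abs abs_minus_cancel abs_of_nonneg power_le_one)
  ultimately have "\<bar>1 + x\<bar> * \<bar>fib_poly x (1 - x) n\<bar> \<le> 2"
    by (simp only: abs_mult[symmetric])
  moreover have "\<bar>fib_poly x (1 - x) n\<bar> \<le> \<bar>1 + x\<bar> * \<bar>fib_poly x (1 - x) n\<bar>"
    using assms by (intro mult_le_cancel_right1[THEN iffD2]) auto
  ultimately show ?thesis by linarith
qed

lemma fib_poly_one_minus_tendsto:
  fixes x :: real
  assumes "0 \<le> x" "x < 1"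
  shows "(\<lambda>n. fib_poly x (1 - x) n) \<longlonglongrightarrow> 1 / (1 + x)"
proof -
  have "(\<lambda>i. (- x) ^ i) sums (1 / (1 - (- x)))"
    using assms by (intro geometric_sums) simp
  then show ?thesis
    by (simp add: sums_def_le fib_poly_one_minus)
qed

lemma tendsto_integral_fib_poly_one_minus:
  fixes w :: "real \<Rightarrow> real"
  assumes w: "integrable lborel w" and w_zero: "\<And>x. x \<notin> {0..1} \<Longrightarrow> w x = 0"
  shows "(\<lambda>n. integral\<^sup>L lborel (\<lambda>x. w x * fib_poly x (1 - x) n))
           \<longlonglongrightarrow> integral\<^sup>L lborel (\<lambda>x. w x / (1 + x))"
proof (rule integral_dominated_convergence)
  have fib_measurable: "(\<lambda>x::real. fib_poly x (1 - x) n) \<in> borel_measurable lborel" for n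
    unfolding fib_poly_one_minus measurable_lborel2
    by (intro borel_measurable_continuous_onI continuous_intros)
  show "(\<lambda>x. w x * fib_poly x (1 - x) n) \<in> borel_measurable lborel" for n
    using w fib_measurable by measurable
  show "(\<lambda>x. w x / (1 + x)) \<in> borel_measurable lborel"
    using w by measurable
  show "integrable lborel (\<lambda>x. 2 * \<bar>w x\<bar>)"
    using w by (intro integrable_mult_right integrable_abs)
  show "AE x in lborel. norm (w x * fib_poly x (1 - x) n) \<le> 2 * \<bar>w x\<bar>" for n
  proof (intro AE_I2)
    fix x
    show "norm (w x * fib_poly x (1 - x) n) \<le> 2 * \<bar>w x\<bar>"
    proof (cases "x \<in> {0..1}")
      case True
      then show ?thesis
        using fib_poly_one_minus_bound[of x n]
        by (auto simp: abs_mult mult.commute intro: mult_left_mono)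
    qed (simp add: w_zero)
  qed
  show "AE x in lborel. (\<lambda>n. w x * fib_poly x (1 - x) n) \<longlonglongrightarrow> w x / (1 + x)"
    \<comment> \<open>at \<open>x = 1\<close> the partial sums of \<open>\<Sum>(-1)^i\<close> oscillate, but a point is null\<close>
    using AE_lborel_singleton[of 1]
  proof eventually_elim
    case (elim x)
    show ?case
    proof (cases "x \<in> {0..1}")
      case True
      with elim have "(\<lambda>n. w x * fib_poly x (1 - x) n) \<longlonglongrightarrow> w x * (1 / (1 + x))"
        by (intro tendsto_mult_left fib_poly_one_minus_tendsto) auto
      then show ?thesis by simp
    qed (simp add: w_zero)
  qed
qed

lemma prod_arith_progression_eq_pochhammer:
  fixes c h :: real
  assumes "h \<noteq> 0"
  shows "(\<Prod>i<k. c + real i * h) = h ^ k * pochhammer (c / h) k"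
proof -
  have "(\<Prod>i<k. c + real i * h) = (\<Prod>i<k. h * (c / h + real i))"
    using assms by (intro prod.cong) (auto simp: field_simps)
  also have "\<dots> = h ^ k * pochhammer (c / h) k"
    by (simp add: prod.distrib pochhammer_prod lessThan_atLeast0)
  finally show ?thesis .
qed

lemma hBernstein_eq_pochhammer:
  assumes "h > 0" "k \<le> m"
  shows "hBernstein m k t h = real (m choose k) * pochhammer (t / h) k
           * pochhammer ((1 - t) / h) (m - k) / pochhammer (t / h + (1 - t) / h) m"
proof -
  have "hBernstein m k t h = real (m choose k) * (h ^ k * pochhammer (t / h) k)
          * (h ^ (m - k) * pochhammer ((1 - t) / h) (m - k)) / (h ^ m * pochhammer (1 / h) m)"
    unfolding hBernstein_def using assms by (simp add: prod_arith_progression_eq_pochhammer)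
  moreover have "pochhammer (1 / h) m > 0"
    using assms by (intro pochhammer_pos) simp
  moreover have "h ^ m = h ^ k * h ^ (m - k)"
    using assms by (simp flip: power_add)
  moreover have "t / h + (1 - t) / h = 1 / h"
    by (simp flip: add_divide_distrib)
  ultimately show ?thesis
    using assms by (simp add: field_simps)
qed

lemma Beta_pos_real:
  fixes a b :: real
  assumes "a > 0" "b > 0"
  shows "Beta a b > 0"
  using assms by (simp add: Beta_def Gamma_real_pos)

lemma Beta_add_of_nat:
  fixes a b :: real
  assumes "a > 0" "b > 0"
  shows "Beta (a + real k) (b + real m)
           = Beta a b * pochhammer a k * pochhammer b m / pochhammer (a + b) (k + m)"
proof -
  have "a \<notin> \<int>\<^sub>\<le>\<^sub>0" "b \<notin> \<int>\<^sub>\<le>\<^sub>0" "a + b \<notin> \<int>\<^sub>\<le>\<^sub>0"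
    using assms by (auto elim!: nonpos_Ints_cases)
  moreover have "Gamma a > 0" "Gamma b > 0" "Gamma (a + b) > 0" "Gamma (a + b + real (k + m)) > 0"
    using assms by (auto intro!: Gamma_real_pos)
  ultimately show ?thesis
    by (simp add: Beta_def pochhammer_Gamma field_simps add_ac)
qed

lemma hBernstein_eq_Beta:
  assumes "0 < t" "t < 1" "h > 0" "k \<le> m"
  shows "hBernstein m k t h = real (m choose k)
           * Beta (t / h + real k) ((1 - t) / h + real (m - k)) / Beta (t / h) ((1 - t) / h)"
proof -
  have "t / h > 0" "(1 - t) / h > 0"
    using assms by auto
  from Beta_add_of_nat[OF this, of k "m - k"] Beta_pos_real[OF this] show ?thesis
    using assms by (simp add: hBernstein_eq_pochhammer)
qed

definition beta_weight :: "real \<Rightarrow> real \<Rightarrow> real \<Rightarrow> real" where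
  "beta_weight a b x = indicator {0..1} x * (x powr (a - 1) * (1 - x) powr (b - 1))"

lemma beta_weight_mult_monomials:
  fixes a b :: real
  assumes "a > 0" "b > 0"
  shows "integrable lborel (\<lambda>x. beta_weight a b x * (x ^ k * (1 - x) ^ m))"
    and "integral\<^sup>L lborel (\<lambda>x. beta_weight a b x * (x ^ k * (1 - x) ^ m))
           = Beta (a + real k) (b + real m)"
proof -
  define g where "g = (\<lambda>x. beta_weight a b x * (x ^ k * (1 - x) ^ m))"
  have powr_mult_power: "y powr (c - 1) * y ^ j = y powr (c + real j - 1)" if "y \<ge> 0" for y c :: real and j
    using that by (cases "y = 0") (simp_all add: powr_realpow[symmetric] powr_add[symmetric] algebra_simps)
  have g_eq: "g = (\<lambda>x. indicator {0..1} x * (x powr (a + real k - 1) * (1 - x) powr (b + real m - 1)))"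
  proof
    fix x
    show "g x = indicator {0..1} x * (x powr (a + real k - 1) * (1 - x) powr (b + real m - 1))"
    proof (cases "x \<in> {0..1}")
      case True
      then have "g x = (x powr (a - 1) * x ^ k) * ((1 - x) powr (b - 1) * (1 - x) ^ m)"
        by (simp add: g_def beta_weight_def mult_ac)
      with True show ?thesis
        by (simp add: powr_mult_power)
    qed (simp add: g_def beta_weight_def)
  qed
  have integrable: "set_integrable lborel {0..1}
      (\<lambda>x. x powr (a + real k - 1) * (1 - x) powr (b + real m - 1))"
    using assms by (intro integrable_Beta) auto
  then show "integrable lborel (\<lambda>x. beta_weight a b x * (x ^ k * (1 - x) ^ m))"
    unfolding g_def[symmetric] by (simp add: g_eq set_integrable_def)
  have "integral\<^sup>L lborel g
      = (LINT x:{0..1}|lborel. x powr (a + real k - 1) * (1 - x) powr (b + real m - 1))"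
    by (simp add: g_eq set_lebesgue_integral_def)
  also have "\<dots> = integral {0..1} (\<lambda>x. x powr (a + real k - 1) * (1 - x) powr (b + real m - 1))"
    by (rule set_borel_integral_eq_integral(2)[OF integrable])
  also have "\<dots> = Beta (a + real k) (b + real m)"
    using assms by (intro integral_unique has_integral_Beta_real) auto
  finally show "integral\<^sup>L lborel (\<lambda>x. beta_weight a b x * (x ^ k * (1 - x) ^ m))
      = Beta (a + real k) (b + real m)"
    by (simp add: g_def)
qed

lemma sum_hBernstein_antidiagonal_eq_integral:
  assumes "0 < t" "t < 1" "h > 0"
  shows "(\<Sum>k\<le>n. hBernstein (n - k) k t h)
           = integral\<^sup>L lborel (\<lambda>x. beta_weight (t / h) ((1 - t) / h) x * fib_poly x (1 - x) n)
             / Beta (t / h) ((1 - t) / h)"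
proof -
  define a b where "a = t / h" and "b = (1 - t) / h"
  have ab: "a > 0" "b > 0"
    using assms by (auto simp: a_def b_def)
  define moment where "moment k = (\<lambda>x. beta_weight a b x * (x ^ k * (1 - x) ^ (n - 2 * k)))" for k
  have summand: "hBernstein (n - k) k t h = real ((n - k) choose k) * integral\<^sup>L lborel (moment k) / Beta a b"
    for k
  proof (cases "k \<le> n - k")
    case True
    then have "n - k - k = n - 2 * k"
      by simp
    with True show ?thesis
      using hBernstein_eq_Beta[OF assms True] beta_weight_mult_monomials(2)[OF ab, of k "n - 2 * k"]
      by (simp add: moment_def a_def b_def)
  qed (simp add: hBernstein_def binomial_eq_0)
  have "(\<Sum>k\<le>n. hBernstein (n - k) k t h)
      = (\<Sum>k\<le>n. integral\<^sup>L lborel (\<lambda>x. real ((n - k) choose k) * moment k x)) / Beta a b"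
    by (simp add: summand sum_divide_distrib)
  also have "\<dots> = integral\<^sup>L lborel (\<lambda>x. \<Sum>k\<le>n. real ((n - k) choose k) * moment k x) / Beta a b"
    using beta_weight_mult_monomials(1)[OF ab]
    by (subst Bochner_Integration.integral_sum) (auto simp: moment_def)
  also have "(\<lambda>x. \<Sum>k\<le>n. real ((n - k) choose k) * moment k x)
      = (\<lambda>x. beta_weight a b x * fib_poly x (1 - x) n)"
    by (simp add: moment_def fib_poly_def sum_distrib_left mult_ac)
  finally show ?thesis
    by (simp add: a_def b_def)
qed

lemma interval_integral_beta_weight:
  "(LBINT x=0..1. x powr (a - 1) * (1 - x) powr (b - 1) / f x)
     = integral\<^sup>L lborel (\<lambda>x. beta_weight a b x / f x)"
proof -
  have "(LBINT x=0..1. x powr (a - 1) * (1 - x) powr (b - 1) / f x)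
      = (LBINT x:{0..1}. x powr (a - 1) * (1 - x) powr (b - 1) / f x)"
    using interval_integral_Icc[of 0 1] by (simp add: zero_ereal_def one_ereal_def)
  also have "\<dots> = integral\<^sup>L lborel (\<lambda>x. beta_weight a b x / f x)"
    unfolding set_lebesgue_integral_def beta_weight_def
    by (intro Bochner_Integration.integral_cong) simp_all
  finally show ?thesis .
qed

theorem mainTheorem11:
  fixes t h :: real
  assumes "0 < t" and "t < 1" and "0 < h"
  shows "(\<lambda>n. \<Sum>k\<le>n. hBernstein (n - k) k t h) \<longlonglongrightarrow>
    (LBINT x=0..1. x powr (t / h - 1) * (1 - x) powr ((1 - t) / h - 1)
                    / ((1 + x) * Beta (t / h) ((1 - t) / h)))"
proof -
  define a b where "a = t / h" and "b = (1 - t) / h"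
  have ab: "a > 0" "b > 0"
    using assms by (auto simp: a_def b_def)
  have "integrable lborel (beta_weight a b)"
    using beta_weight_mult_monomials(1)[OF ab, of 0 0] by simp
  moreover have "beta_weight a b x = 0" if "x \<notin> {0..1}" for x
    using that by (simp add: beta_weight_def)
  ultimately have "(\<lambda>n. integral\<^sup>L lborel (\<lambda>x. beta_weight a b x * fib_poly x (1 - x) n))
      \<longlonglongrightarrow> integral\<^sup>L lborel (\<lambda>x. beta_weight a b x / (1 + x))"
    by (rule tendsto_integral_fib_poly_one_minus)
  then have "(\<lambda>n. integral\<^sup>L lborel (\<lambda>x. beta_weight a b x * fib_poly x (1 - x) n) / Beta a b)
      \<longlonglongrightarrow> integral\<^sup>L lborel (\<lambda>x. beta_weight a b x / (1 + x)) / Beta a b"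
    using Beta_pos_real[OF ab] by (intro tendsto_intros) auto
  also have "integral\<^sup>L lborel (\<lambda>x. beta_weight a b x / (1 + x)) / Beta a b
      = integral\<^sup>L lborel (\<lambda>x. beta_weight a b x / ((1 + x) * Beta a b))"
    by (simp only: divide_divide_eq_left[symmetric] integral_divide_zero)
  finally show ?thesis
    using assms by (simp add: sum_hBernstein_antidiagonal_eq_integral interval_integral_beta_weight a_def b_def)
qed

end
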